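(* In the deterministic generalized top-$k$ selective gossip setting described in the context (with $G$ connected), let $\{a,b\}\in E$. Then for every candidate $j\notin S^\infty_{ab}$ and every agent $i\in[m]$, $X_{ij}(\infty)\le\alpha_{ab}$.
   Context: Fix integers $m\ge2$, $n\ge1$, $k\in[n]$. For $v\in\mathbb{R}^n$ let $\sigma$ be a permutation of $[n]$ with $v_{\sigma(1)}\ge\cdots\ge v_{\sigma(n)}$ and set $T_k(v)=\{j\in[n]: v_j\ge v_{\sigma(k)}\}$ (so $|T_k(v)|\ge k$). Let $\{i_1(t),i_2(t)\}_{t\ge0}$ be a deterministic sequence of unordered pairs of distinct agents in $[m]$, and let $E$ be the set of pairs $\{a,b\}$ with $\{i_1(t),i_2(t)\}=\{a,b\}$ for infinitely many $t$; assume the graph $G=([m],E)$ is connected. Let $X(0)\in\mathbb{R}^{m\times n}$ and define $X(t)$ by: $S(t)=T_k(X_{i_1(t)}(t))\cup T_k(X_{i_2(t)}(t))$ (where $X_i(t)$ is row $i$), $X_{ij}(t+1)=\tfrac12(X_{i_1(t)j}(t)+X_{i_2(t)j}(t))$ if $i\in\{i_1(t),i_2(t)\}$ and $j\in S(t)$, and $X_{ij}(t+1)=X_{ij}(t)$ otherwise. The limit $X(\infty)=\lim_{t\to\infty}X(t)$ exists. For $\{a,b\}\in E$ let $\beta_{ab}(s)$ be the $s$-th time $t$ with $\{i_1(t),i_2(t)\}=\{a,b\}$, let $S^\infty_{ab}=\bigcap_{t\ge0}\bigcup_{s\ge t}S(\beta_{ab}(s))$ be the set of candidates discussed by $a,b$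 infinitely often, and $\alpha_{ab}=\min_{j\in S^\infty_{ab}}X_{aj}(\infty)$ (which also equals $\min_{j\in S^\infty_{ab}}X_{bj}(\infty)$). *)

theory Defs
  imports "HOL-Combinatorics.Permutations" "HOL-Library.Infinite_Set" Complex_Main
begin

text \<open>Agents are indexed by {..<m}, candidates by {..<n} (0-based).
  A vector v in R^n is a function nat => real, only values on {..<n} matter.\<close>

definition sorts_desc :: "nat \<Rightarrow> (nat \<Rightarrow> real) \<Rightarrow> (nat \<Rightarrow> nat) \<Rightarrow> bool" where
  "sorts_desc n v \<sigma> \<longleftrightarrow> \<sigma> permutes {..<n} \<and>
     (\<forall>a b. a \<le> b \<and> b < n \<longrightarrow> v (\<sigma> b) \<le> v (\<sigma> a))"

text \<open>T_k(v) = {j in [n]. v_j >= v_(sigma(k))}, with k in {1..n} (1-based position,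
  hence index k-1 for the 0-based permutation).\<close>
definition topk :: "nat \<Rightarrow> nat \<Rightarrow> (nat \<Rightarrow> real) \<Rightarrow> nat set" where
  "topk n k v = {j \<in> {..<n}. v ((SOME \<sigma>. sorts_desc n v \<sigma>) (k - 1)) \<le> v j}"

primrec gossip :: "nat \<Rightarrow> nat \<Rightarrow> (nat \<Rightarrow> nat \<Rightarrow> real) \<Rightarrow> (nat \<Rightarrow> nat) \<Rightarrow> (nat \<Rightarrow> nat)
                   \<Rightarrow> nat \<Rightarrow> nat \<Rightarrow> nat \<Rightarrow> real" where
  "gossip n k X0 i1 i2 0 = X0"
| "gossip n k X0 i1 i2 (Suc t) =
     (let Y = gossip n k X0 i1 i2 t;
          S = topk n k (Y (i1 t)) \<union> topk n k (Y (i2 t))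
      in (\<lambda>i j. if (i = i1 t \<or> i = i2 t) \<and> j \<in> S
                 then (Y (i1 t) j + Y (i2 t) j) / 2 else Y i j))"

definition gossip_S :: "nat \<Rightarrow> nat \<Rightarrow> (nat \<Rightarrow> nat \<Rightarrow> real) \<Rightarrow> (nat \<Rightarrow> nat) \<Rightarrow> (nat \<Rightarrow> nat)
                   \<Rightarrow> nat \<Rightarrow> nat set" where
  "gossip_S n k X0 i1 i2 t =
     topk n k (gossip n k X0 i1 i2 t (i1 t)) \<union> topk n k (gossip n k X0 i1 i2 t (i2 t))"

definition edges_inf :: "(nat \<Rightarrow> nat) \<Rightarrow> (nat \<Rightarrow> nat) \<Rightarrow> nat set set" where
  "edges_inf i1 i2 = {e. infinite {t. {i1 t, i2 t} = e}}"

definition connected_graph :: "nat \<Rightarrow> nat set set \<Rightarrow> bool" where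
  "connected_graph m E \<longleftrightarrow>
     (\<forall>a<m. \<forall>b<m. (a, b) \<in> ({(x, y). {x, y} \<in> E})\<^sup>*)"

text \<open>beta_ab(s): the s-th (0-based) time the pair {a,b} is activated.\<close>
definition beta :: "(nat \<Rightarrow> nat) \<Rightarrow> (nat \<Rightarrow> nat) \<Rightarrow> nat \<Rightarrow> nat \<Rightarrow> nat \<Rightarrow> nat" where
  "beta i1 i2 a b = enumerate {t. {i1 t, i2 t} = {a, b}}"

definition S_inf :: "nat \<Rightarrow> nat \<Rightarrow> (nat \<Rightarrow> nat \<Rightarrow> real) \<Rightarrow> (nat \<Rightarrow> nat) \<Rightarrow> (nat \<Rightarrow> nat)
                   \<Rightarrow> nat \<Rightarrow> nat \<Rightarrow> nat set" where
  "S_inf n k X0 i1 i2 a b =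
     (\<Inter>t. \<Union>s\<in>{t..}. gossip_S n k X0 i1 i2 (beta i1 i2 a b s))"

end

theory Submission
  imports Defs
begin

(* For an agent i let theta_i be the k-th largest entry of the limit row
   Xinf i.  Three facts about a pair {c,d} discussed infinitely often drive the proof:
   (1) on S_inf c d the limit rows of c and d agree, because every discussion equalises
       the discussed entries;
   (2) theta_d <= theta_c, since eventually the top-k set of d is contained in S_inf c d,
       where Xinf d = Xinf c, so it consists of k entries of Xinf c that are >= theta_d;
   (3) every candidate j with Xinf c j > theta_c is eventually in the top-k set of c,
       hence lies in S_inf c d; if theta_c = theta_d, conversely every j in S_inf c d
       has Xinf c j >= theta_c.
   By (2) and connectivity the threshold theta is the same for all agents.  By (3) and (1),
   an entry above theta is propagated unchanged along every edge, hence is the same for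
   all agents.  Now if Xinf i j > min over S_inf a b of Xinf a >= theta, then also
   Xinf a j > theta, so j is in S_inf a b by (3). *)

section \<open>The k-th largest value of a vector\<close>

text \<open>Every vector admits a sorting permutation, so the SOME in topk is well-defined.\<close>

lemma sorts_desc_ex: "\<exists>\<sigma>. sorts_desc n v \<sigma>"
proof -
  define xs where "xs = sort_key (\<lambda>j. - v j) [0..<n]"
  have "mset xs = mset [0..<n]" by (simp add: xs_def)
  then obtain p where p: "p permutes {..<length [0..<n]}" "permute_list p [0..<n] = xs"
    by (rule mset_eq_permutation)
  have pn: "p permutes {..<n}" using p(1) by simp
  have len: "length xs = n" by (simp add: xs_def)
  have xs_p: "xs ! i = p i" if "i < n" for i
  proof -
    have "p i < n" using pn that permutes_in_image by fastforce
    then show ?thesis using p(2)[symmetric] that by (simp add: permute_list_def)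
  qed
  have sorted: "sorted (map (\<lambda>j. - v j) xs)" by (simp add: xs_def)
  have "v (p b) \<le> v (p a)" if "a \<le> b" "b < n" for a b
  proof -
    have "(map (\<lambda>j. - v j) xs) ! a \<le> (map (\<lambda>j. - v j) xs) ! b"
      using sorted_nth_mono[OF sorted, of a b] that len by simp
    then show ?thesis using that len xs_p by simp
  qed
  then show ?thesis using pn unfolding sorts_desc_def by blast
qed

definition kth :: "nat \<Rightarrow> nat \<Rightarrow> (nat \<Rightarrow> real) \<Rightarrow> real" where
  "kth n k v = v ((SOME \<sigma>. sorts_desc n v \<sigma>) (k - 1))"

lemma topk_eq: "topk n k v = {j \<in> {..<n}. kth n k v \<le> v j}"
  unfolding topk_def kth_def by simp

lemma kth_sorted:
  obtains \<sigma> where "sorts_desc n v \<sigma>" "kth n k v = v (\<sigma> (k - 1))"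
proof -
  have "sorts_desc n v (SOME \<sigma>. sorts_desc n v \<sigma>)" using sorts_desc_ex by (rule someI_ex)
  then show ?thesis by (rule that) (simp add: kth_def)
qed

lemma card_ge_kth:
  assumes "1 \<le> k" "k \<le> n"
  shows "k \<le> card {j \<in> {..<n}. kth n k v \<le> v j}"
proof -
  obtain \<sigma> where sorted: "sorts_desc n v \<sigma>" and kth: "kth n k v = v (\<sigma> (k - 1))"
    by (rule kth_sorted)
  have perm: "\<sigma> permutes {..<n}"
    and mono: "\<And>a b. a \<le> b \<Longrightarrow> b < n \<Longrightarrow> v (\<sigma> b) \<le> v (\<sigma> a)"
    using sorted unfolding sorts_desc_def by auto
  have "\<sigma> ` {..<k} \<subseteq> {j \<in> {..<n}. kth n k v \<le> v j}"
  proof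
    fix j assume "j \<in> \<sigma> ` {..<k}"
    then obtain b where b: "b < k" "j = \<sigma> b" by auto
    have "\<sigma> b < n" using b assms perm permutes_in_image by fastforce
    moreover have "v (\<sigma> (k - 1)) \<le> v (\<sigma> b)" using mono[of b "k - 1"] b assms by simp
    ultimately show "j \<in> {j \<in> {..<n}. kth n k v \<le> v j}" using b kth by simp
  qed
  moreover have "card (\<sigma> ` {..<k}) = k"
    using permutes_inj[OF perm] by (simp add: card_image inj_on_subset)
  ultimately show ?thesis
    using card_mono[of "{j \<in> {..<n}. kth n k v \<le> v j}" "\<sigma> ` {..<k}"] by simp
qed

lemma card_gt_kth:
  assumes "1 \<le> k" "k \<le> n"
  shows "card {j \<in> {..<n}. kth n k v < v j} < k"
proof -
  obtain \<sigma> where sorted: "sorts_desc n v \<sigma>" and kth: "kth n k v = v (\<sigma> (k - 1))"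
    by (rule kth_sorted)
  have perm: "\<sigma> permutes {..<n}"
    and mono: "\<And>a b. a \<le> b \<Longrightarrow> b < n \<Longrightarrow> v (\<sigma> b) \<le> v (\<sigma> a)"
    using sorted unfolding sorts_desc_def by auto
  have "{j \<in> {..<n}. kth n k v < v j} \<subseteq> \<sigma> ` {..<k - 1}"
  proof
    fix j assume j: "j \<in> {j \<in> {..<n}. kth n k v < v j}"
    then have "j \<in> \<sigma> ` {..<n}" using permutes_image[OF perm] by simp
    then obtain b where b: "b < n" "j = \<sigma> b" by auto
    have "b < k - 1"
    proof (rule ccontr)
      assume "\<not> b < k - 1"
      then have "v (\<sigma> b) \<le> v (\<sigma> (k - 1))" using mono b by simp
      then show False using j b kth by simp
    qed
    then show "j \<in> \<sigma> ` {..<k - 1}" using b by auto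
  qed
  then have "card {j \<in> {..<n}. kth n k v < v j} \<le> card (\<sigma> ` {..<k - 1})"
    by (intro card_mono) auto
  also have "\<dots> \<le> k - 1" using card_image_le[of "{..<k - 1}" \<sigma>] by simp
  finally show ?thesis using assms by simp
qed

lemma card_topk: "1 \<le> k \<Longrightarrow> k \<le> n \<Longrightarrow> k \<le> card (topk n k v)"
  unfolding topk_eq by (rule card_ge_kth)

section \<open>Top-k sets along a convergent family of vectors\<close>

lemma eventually_notin_topk:
  assumes k: "1 \<le> k" "k \<le> n"
    and conv: "\<forall>l<n. ((\<lambda>t. v t l) \<longlongrightarrow> x l) F"
    and j: "j < n" "x j < kth n k x"
  shows "eventually (\<lambda>t. j \<notin> topk n k (v t)) F"
proof -
  define C where "C = {l \<in> {..<n}. kth n k x \<le> x l}"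
  have "\<forall>l\<in>C. eventually (\<lambda>t. v t j < v t l) F"
  proof
    fix l assume l: "l \<in> C"
    have "((\<lambda>t. v t l - v t j) \<longlongrightarrow> x l - x j) F"
      using conv l j unfolding C_def by (auto intro: tendsto_diff)
    moreover have "x l - x j > 0" using l j unfolding C_def by auto
    ultimately have "eventually (\<lambda>t. v t l - v t j > 0) F" by (rule order_tendstoD)
    then show "eventually (\<lambda>t. v t j < v t l) F" by (rule eventually_mono) simp
  qed
  then have ev: "eventually (\<lambda>t. \<forall>l\<in>C. v t j < v t l) F"
    by (rule eventually_ball_finite[rotated]) (simp add: C_def)
  show ?thesis
  proof (rule eventually_mono[OF ev], rule notI)
    fix t assume below: "\<forall>l\<in>C. v t j < v t l" and jt: "j \<in> topk n k (v t)"
    have "C \<subseteq> {l \<in> {..<n}. kth n k (v t) < v t l}"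
      using below jt unfolding topk_eq C_def by fastforce
    then have "card C \<le> card {l \<in> {..<n}. kth n k (v t) < v t l}" by (intro card_mono) auto
    then show False using card_ge_kth[OF k, of x] card_gt_kth[OF k, of "v t"]
      unfolding C_def by simp
  qed
qed

lemma eventually_in_topk:
  assumes k: "1 \<le> k" "k \<le> n"
    and conv: "\<forall>l<n. ((\<lambda>t. v t l) \<longlongrightarrow> x l) F"
    and j: "j < n" "kth n k x < x j"
  shows "eventually (\<lambda>t. j \<in> topk n k (v t)) F"
proof -
  define D where "D = {l \<in> {..<n}. kth n k x < x l}"
  have "\<forall>l\<in>{..<n} - D. eventually (\<lambda>t. v t l < v t j) F"
  proof
    fix l assume l: "l \<in> {..<n} - D"
    have "((\<lambda>t. v t j - v t l) \<longlongrightarrow> x j - x l) F"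
      using conv l j by (auto intro: tendsto_diff)
    moreover have "x j - x l > 0" using l j unfolding D_def by auto
    ultimately have "eventually (\<lambda>t. v t j - v t l > 0) F" by (rule order_tendstoD)
    then show "eventually (\<lambda>t. v t l < v t j) F" by (rule eventually_mono) simp
  qed
  then have ev: "eventually (\<lambda>t. \<forall>l\<in>{..<n} - D. v t l < v t j) F"
    by (rule eventually_ball_finite[rotated]) simp
  show ?thesis
  proof (rule eventually_mono[OF ev], rule ccontr)
    fix t assume above: "\<forall>l\<in>{..<n} - D. v t l < v t j" and jt: "j \<notin> topk n k (v t)"
    have "v t j < kth n k (v t)" using jt j unfolding topk_eq by auto
    have "topk n k (v t) \<subseteq> D"
    proof
      fix l assume l: "l \<in> topk n k (v t)"
      then have "\<not> v t l < v t j" using \<open>v t j < kth n k (v t)\<close> unfolding topk_eq by auto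
      then show "l \<in> D" using above l unfolding topk_eq by blast
    qed
    then have "card (topk n k (v t)) \<le> card D" by (intro card_mono) (auto simp: D_def)
    then show False using card_topk[OF k, of "v t"] card_gt_kth[OF k, of x]
      unfolding D_def by simp
  qed
qed

section \<open>Limsup sets of sequences of finite sets\<close>

lemma limsup_set_iff_frequently:
  "j \<in> (\<Inter>t. \<Union>s\<in>{t..}. S s) \<longleftrightarrow> frequently (\<lambda>s. j \<in> S s) sequentially"
  unfolding frequently_sequentially by auto

lemma eventually_subset_limsup_set:
  assumes "finite U" "\<And>s. S s \<subseteq> U"
  shows "eventually (\<lambda>s. S s \<subseteq> (\<Inter>t. \<Union>s\<in>{t..}. S s)) sequentially"
proof -
  have "\<forall>j\<in>U - (\<Inter>t. \<Union>s\<in>{t..}. S s). eventually (\<lambda>s. j \<notin> S s) sequentially"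
    by (metis Diff_iff limsup_set_iff_frequently not_frequently)
  then have "eventually (\<lambda>s. \<forall>j\<in>U - (\<Inter>t. \<Union>s\<in>{t..}. S s). j \<notin> S s) sequentially"
    by (rule eventually_ball_finite[rotated]) (use assms in simp)
  then show ?thesis by (rule eventually_mono) (use assms in blast)
qed

section \<open>The gossip process\<close>

lemma gossip_S_equalises:
  assumes "j \<in> gossip_S n k X0 i1 i2 t"
  shows "gossip n k X0 i1 i2 (Suc t) (i1 t) j = gossip n k X0 i1 i2 (Suc t) (i2 t) j"
  using assms by (simp add: gossip_S_def Let_def)

locale gossip_limit =
  fixes m n k :: nat and X0 :: "nat \<Rightarrow> nat \<Rightarrow> real" and i1 i2 :: "nat \<Rightarrow> nat"
    and Xinf :: "nat \<Rightarrow> nat \<Rightarrow> real"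
  assumes k_pos: "1 \<le> k" and k_le: "k \<le> n"
    and pairs_valid: "\<forall>t. i1 t < m \<and> i2 t < m \<and> i1 t \<noteq> i2 t"
    and converges: "\<forall>i<m. \<forall>j<n. (\<lambda>t. gossip n k X0 i1 i2 t i j) \<longlonglongrightarrow> Xinf i j"
begin

abbreviation "X \<equiv> gossip n k X0 i1 i2"
abbreviation "Sinf c d \<equiv> S_inf n k X0 i1 i2 c d"
abbreviation "S_beta c d s \<equiv> gossip_S n k X0 i1 i2 (beta i1 i2 c d s)"

definition threshold :: "nat \<Rightarrow> real" where
  "threshold i = kth n k (Xinf i)"

lemma row_converges: "i < m \<Longrightarrow> \<forall>l<n. (\<lambda>t. X t i l) \<longlonglongrightarrow> Xinf i l"
  using converges by blast

context
  fixes c d assumes edge: "{c, d} \<in> edges_inf i1 i2"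
begin

lemma edge_times_infinite: "infinite {t. {i1 t, i2 t} = {c, d}}"
  using edge unfolding edges_inf_def by simp

lemma edge_agents: "c < m" "d < m"
proof -
  obtain t where "{i1 t, i2 t} = {c, d}" using not_finite_existsD[OF edge_times_infinite] by auto
  then show "c < m" "d < m" using pairs_valid by (auto simp: doubleton_eq_iff)
qed

lemma beta_strict_mono: "strict_mono (beta i1 i2 c d)"
  unfolding beta_def using edge_times_infinite by (rule strict_mono_enumerate)

lemma beta_pair: "{i1 (beta i1 i2 c d s), i2 (beta i1 i2 c d s)} = {c, d}"
  using enumerate_in_set[OF edge_times_infinite] unfolding beta_def by simp

lemma eventually_beta:
  "eventually P sequentially \<Longrightarrow> eventually (\<lambda>s. P (beta i1 i2 c d s)) sequentially"
  using filterlim_subseq[OF beta_strict_mono] unfolding filterlim_iff by blast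

lemma S_beta_eq:
  "S_beta c d s = topk n k (X (beta i1 i2 c d s) c) \<union> topk n k (X (beta i1 i2 c d s) d)"
  using beta_pair[of s] unfolding gossip_S_def by (auto simp: doubleton_eq_iff)

lemma S_beta_subset: "S_beta c d s \<subseteq> {..<n}"
  unfolding S_beta_eq topk_eq by auto

lemma Sinf_limsup: "Sinf c d = (\<Inter>t. \<Union>s\<in>{t..}. S_beta c d s)"
  unfolding S_inf_def by simp

lemma Sinf_subset: "Sinf c d \<subseteq> {..<n}"
  unfolding Sinf_limsup using S_beta_subset by blast

lemma Sinf_iff_frequently: "j \<in> Sinf c d \<longleftrightarrow> frequently (\<lambda>s. j \<in> S_beta c d s) sequentially"
  unfolding Sinf_limsup by (rule limsup_set_iff_frequently)

lemma eventually_S_beta_subset: "eventually (\<lambda>s. S_beta c d s \<subseteq> Sinf c d) sequentially"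
  unfolding Sinf_limsup by (rule eventually_subset_limsup_set[OF finite_lessThan S_beta_subset])

lemma Sinf_if_eventually_topk:
  assumes "eventually (\<lambda>t. j \<in> topk n k (X t c)) sequentially"
  shows "j \<in> Sinf c d"
proof -
  have "eventually (\<lambda>s. j \<in> S_beta c d s) sequentially"
    using eventually_beta[OF assms] by (rule eventually_mono) (simp add: S_beta_eq)
  then show ?thesis unfolding Sinf_iff_frequently by (rule eventually_frequently[rotated]) simp
qed

lemma not_Sinf_if_eventually_not_topk:
  assumes "eventually (\<lambda>t. j \<notin> topk n k (X t c) \<and> j \<notin> topk n k (X t d)) sequentially"
  shows "j \<notin> Sinf c d"
proof -
  have "eventually (\<lambda>s. j \<notin> S_beta c d s) sequentially"
    using eventually_beta[OF assms] by (rule eventually_mono) (simp add: S_beta_eq)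
  then show ?thesis unfolding Sinf_iff_frequently by (simp add: not_frequently[symmetric])
qed

text \<open>Fact (1): on the candidates discussed infinitely often the two limit rows agree, since
  right after each discussion the discussed entries coincide.\<close>

lemma Sinf_rows_agree:
  assumes j: "j \<in> Sinf c d"
  shows "Xinf c j = Xinf d j"
proof (rule ccontr)
  assume ne: "Xinf c j \<noteq> Xinf d j"
  have jn: "j < n" using j Sinf_subset by blast
  let ?gap = "\<lambda>s. X (Suc (beta i1 i2 c d s)) c j - X (Suc (beta i1 i2 c d s)) d j"
  have after: "(\<lambda>t. X (Suc t) i j) \<longlonglongrightarrow> Xinf i j" if "i < m" for i
    using converges that jn by (intro LIMSEQ_Suc) auto
  have "?gap \<longlonglongrightarrow> Xinf c j - Xinf d j"
    using LIMSEQ_subseq_LIMSEQ[OF after[OF edge_agents(1)] beta_strict_mono]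
      LIMSEQ_subseq_LIMSEQ[OF after[OF edge_agents(2)] beta_strict_mono]
    by (intro tendsto_diff) (auto simp: o_def)
  then have "eventually (\<lambda>s. ?gap s \<noteq> 0) sequentially"
    by (rule tendsto_imp_eventually_ne) (use ne in simp)
  then obtain N where N: "\<And>s. s \<ge> N \<Longrightarrow> ?gap s \<noteq> 0"
    unfolding eventually_sequentially by auto
  obtain s where s: "s \<ge> N" "j \<in> S_beta c d s"
    using j unfolding Sinf_iff_frequently frequently_sequentially by auto
  have "?gap s = 0"
    using gossip_S_equalises[OF s(2)] beta_pair[of s] by (auto simp: doubleton_eq_iff)
  then show False using N s by blast
qed

text \<open>Eventually the top-k set of d
  (at least k candidates, none below theta_d) lies in Sinf c d, where Xinf d = Xinf c; if
  theta_c < theta_d these would be k entries of Xinf c strictly above theta_c.\<close>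

lemma threshold_edge_le: "threshold d \<le> threshold c"
proof (rule ccontr)
  assume lt: "\<not> threshold d \<le> threshold c"
  have "\<forall>l\<in>{..<n}. eventually (\<lambda>t. Xinf d l < threshold d \<longrightarrow> l \<notin> topk n k (X t d)) sequentially"
    using eventually_notin_topk[OF k_pos k_le row_converges[OF edge_agents(2)]]
    unfolding threshold_def by (auto intro: eventually_mono)
  then have "eventually (\<lambda>t. \<forall>l\<in>{..<n}. Xinf d l < threshold d \<longrightarrow> l \<notin> topk n k (X t d))
      sequentially"
    by (rule eventually_ball_finite[OF finite_lessThan])
  from eventually_happens'[OF _ eventually_conj[OF eventually_beta[OF this]
      eventually_S_beta_subset]]
  obtain s where
    high: "\<forall>l\<in>{..<n}. Xinf d l < threshold d \<longrightarrow> l \<notin> topk n k (X (beta i1 i2 c d s) d)"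
    and sub: "S_beta c d s \<subseteq> Sinf c d" by auto
  define T where "T = topk n k (X (beta i1 i2 c d s) d)"
  have "T \<subseteq> {l \<in> {..<n}. threshold c < Xinf c l}"
  proof
    fix l assume l: "l \<in> T"
    then have ln: "l < n" unfolding T_def topk_eq by auto
    have "l \<in> Sinf c d" using l sub S_beta_eq[of s] unfolding T_def by blast
    then have "Xinf c l = Xinf d l" by (rule Sinf_rows_agree)
    moreover have "\<not> Xinf d l < threshold d" using high l ln unfolding T_def by auto
    ultimately show "l \<in> {l \<in> {..<n}. threshold c < Xinf c l}" using lt ln by auto
  qed
  then have "card T \<le> card {l \<in> {..<n}. threshold c < Xinf c l}" by (intro card_mono) auto
  then show False using card_topk[OF k_pos k_le] card_gt_kth[OF k_pos k_le]
    unfolding T_def threshold_def by (metis leD order.strict_trans1)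
qed

lemma Sinf_if_above_threshold:
  assumes "j < n" "threshold c < Xinf c j"
  shows "j \<in> Sinf c d"
  using eventually_in_topk[OF k_pos k_le row_converges[OF edge_agents(1)]] assms
  by (intro Sinf_if_eventually_topk) (auto simp: threshold_def)

lemma threshold_le_Sinf:
  assumes j: "j \<in> Sinf c d" and same: "threshold c = threshold d"
  shows "threshold c \<le> Xinf c j"
proof (rule ccontr)
  assume "\<not> threshold c \<le> Xinf c j"
  then have "Xinf c j < threshold c" "Xinf d j < threshold d"
    using Sinf_rows_agree[OF j] same by auto
  moreover have "j < n" using j Sinf_subset by blast
  ultimately have "j \<notin> Sinf c d"
    using eventually_notin_topk[OF k_pos k_le row_converges[OF edge_agents(1)]]
      eventually_notin_topk[OF k_pos k_le row_converges[OF edge_agents(2)]]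
    by (intro not_Sinf_if_eventually_not_topk eventually_conj) (auto simp: threshold_def)
  then show False using j by contradiction
qed

lemma Sinf_nonempty: "Sinf c d \<noteq> {}"
proof -
  obtain s where s: "S_beta c d s \<subseteq> Sinf c d"
    using eventually_S_beta_subset eventually_happens' by fastforce
  have "topk n k (X (beta i1 i2 c d s) c) \<noteq> {}"
    using card_topk[OF k_pos k_le] k_pos by (metis card.empty not_one_le_zero order_trans)
  then show ?thesis using s S_beta_eq[of s] by blast
qed

end

abbreviation "gossip_edge \<equiv> {(x, y). {x, y} \<in> edges_inf i1 i2}"

text \<open>By (2) applied in both directions of each edge, all agents share one threshold.\<close>

lemma threshold_constant:
  assumes conn: "connected_graph m (edges_inf i1 i2)" and "i < m" "a < m"
  shows "threshold i = threshold a"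
proof -
  have "(a, i) \<in> gossip_edge\<^sup>*" using conn assms unfolding connected_graph_def by blast
  then show ?thesis
  proof (induction rule: rtrancl_induct)
    case (step y z)
    then have "{y, z} \<in> edges_inf i1 i2" "{z, y} \<in> edges_inf i1 i2"
      by (simp_all add: insert_commute)
    then show ?case using threshold_edge_le step.IH by (metis order_antisym)
  qed simp
qed

text \<open>An entry above the common threshold is propagated unchanged along every edge, by (3)
  and (1), so it is the same for all agents.\<close>

lemma above_threshold_uniform:
  assumes conn: "connected_graph m (edges_inf i1 i2)" and i: "i < m" and y: "y < m"
    and j: "j < n" "threshold i < Xinf i j"
  shows "Xinf y j = Xinf i j"
proof -
  have "(i, y) \<in> gossip_edge\<^sup>*" using conn i y unfolding connected_graph_def by blast
  then have "y < m \<and> Xinf y j = Xinf i j"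
  proof (induction rule: rtrancl_induct)
    case (step y z)
    then have edge: "{y, z} \<in> edges_inf i1 i2" by simp
    have "threshold y < Xinf y j"
      using step.IH j threshold_constant[OF conn _ i] by simp
    then have "j \<in> Sinf y z" by (rule Sinf_if_above_threshold[OF edge j(1)])
    then show ?case using Sinf_rows_agree[OF edge] step.IH edge_agents(2)[OF edge] by simp
  qed (use i in simp)
  then show ?thesis by simp
qed

end

theorem mainTheorem4:
  fixes m n k :: nat and X0 :: "nat \<Rightarrow> nat \<Rightarrow> real" and i1 i2 :: "nat \<Rightarrow> nat"
    and Xinf :: "nat \<Rightarrow> nat \<Rightarrow> real" and a b :: nat
  assumes "m \<ge> 2" and "n \<ge> 1" and "1 \<le> k" and "k \<le> n"
    and "\<forall>t. i1 t < m \<and> i2 t < m \<and> i1 t \<noteq> i2 t"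
    and "connected_graph m (edges_inf i1 i2)"
    and "\<forall>i<m. \<forall>j<n. (\<lambda>t. gossip n k X0 i1 i2 t i j) \<longlonglongrightarrow> Xinf i j"
    and "{a, b} \<in> edges_inf i1 i2"
  shows "\<forall>j<n. j \<notin> S_inf n k X0 i1 i2 a b \<longrightarrow>
           (\<forall>i<m. Xinf i j \<le> (MIN j'\<in>S_inf n k X0 i1 i2 a b. Xinf a j'))"
proof (intro allI impI)
  interpret gossip_limit m n k X0 i1 i2 Xinf using assms by unfold_locales auto
  note conn = assms(6) and edge = assms(8)
  fix j i assume j: "j < n" "j \<notin> Sinf a b" and i: "i < m"
  have a: "a < m" "b < m" using edge_agents[OF edge] by auto
  have "finite (Sinf a b)" using Sinf_subset[OF edge] finite_subset by blast
  then obtain j0 where j0: "j0 \<in> Sinf a b" "(MIN j'\<in>Sinf a b. Xinf a j') = Xinf a j0"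
    using Sinf_nonempty[OF edge] by (metis (no_types, lifting) Min_in finite_imageI
        image_iff image_is_empty)
  have "threshold i \<le> Xinf a j0"
    using threshold_le_Sinf[OF edge j0(1)] threshold_constant[OF conn] i a by metis
  show "Xinf i j \<le> (MIN j'\<in>Sinf a b. Xinf a j')"
  proof (rule ccontr)
    assume "\<not> ?thesis"
    then have "threshold i < Xinf i j" using j0 \<open>threshold i \<le> Xinf a j0\<close> by simp
    then have "threshold a < Xinf a j"
      using above_threshold_uniform[OF conn i a(1) j(1)] threshold_constant[OF conn i a(1)] by simp
    then show False using Sinf_if_above_threshold[OF edge j(1)] j(2) by blast
  qed
qed

end
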